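(* For $\mu,\nu>0$, $\Gamma\in\mathbb R\setminus\{0\}$ and $a\in\mathbb Q$, $$\big(E_{\mu,\Gamma,a}*G_\nu\big)(q)=\sqrt{\frac{2\pi\mu}{\Gamma^2}}\;G_{\mu+\nu}(q)\;\vartheta\!\begin{bmatrix}0\\ a\end{bmatrix}\!\Big(-\frac{q}{(1+\nu/\mu)\Gamma},\,\frac{2\pi i\nu}{(1+\nu/\mu)\Gamma^2}\Big)\quad\text{for all }q\in\mathbb R.$$
   Context: $G_{\nu}(x)=(2\pi\nu)^{-1/2}e^{-x^2/(2\nu)}$; $(f*g)(x)=\int f(y)g(x-y)\,dy$; $E_{\mu,\Gamma,a}(x)=e^{-x^2/(2\mu)}\sum_{s\in\mathbb Z}\delta(x-(s+a)\Gamma)$ (a Gaussian-weighted Dirac comb), so $(E_{\mu,\Gamma,a}*G_\nu)(q)=\sum_{s}e^{-(s+a)^2\Gamma^2/(2\mu)}G_\nu(q-(s+a)\Gamma)$. Theta function with characteristics: for $a,b\in\mathbb Q$, $z\in\mathbb C$, $\mathrm{Im}\,\tau>0$, $\vartheta\!\begin{bmatrix}a\\ b\end{bmatrix}\!(z,\tau)=\sum_{s\in\mathbb Z}\exp[\pi i\tau(s+a)^2+2\pi i(z+b)(s+a)]$. *)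

theory Defs
  imports "HOL-Analysis.Analysis"
begin

definition gauss :: "real \<Rightarrow> real \<Rightarrow> real" where
  "gauss \<nu> x = exp (- x\<^sup>2 / (2 * \<nu>)) / sqrt (2 * pi * \<nu>)"

text \<open>Convolution of the Gaussian-weighted Dirac comb E_{mu,Gamma,a} with G_nu, evaluated at q:
  sum over s in Z of exp(-(s+a)^2 Gamma^2/(2 mu)) * G_nu(q - (s+a) Gamma).\<close>
definition comb_conv_gauss :: "real \<Rightarrow> real \<Rightarrow> real \<Rightarrow> real \<Rightarrow> real \<Rightarrow> real" where
  "comb_conv_gauss \<mu> \<Gamma> a \<nu> q =
     (\<Sum>\<^sub>\<infinity>s::int. exp (- (of_int s + a)\<^sup>2 * \<Gamma>\<^sup>2 / (2 * \<mu>)) * gauss \<nu> (q - (of_int s + a) * \<Gamma>))"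

definition theta_char :: "real \<Rightarrow> real \<Rightarrow> complex \<Rightarrow> complex \<Rightarrow> complex" where
  "theta_char a b z \<tau> =
     (\<Sum>\<^sub>\<infinity>s::int. exp (pi * \<i> * \<tau> * (of_real (of_int s + a))\<^sup>2
                       + 2 * pi * \<i> * (z + of_real b) * of_real (of_int s + a)))"

end

(*
  Completing the square turns each term of the comb convolution into a constant multiple of
  exp (-A (x + s)^2), where A = (mu + nu) Gamma^2 / (2 mu nu) and x = a - mu q / ((mu + nu) Gamma).
  So the left-hand side is a constant times the periodization P(x) = sum_n exp (-A (x + n)^2) of a
  Gaussian. P is continuous and 1-periodic, and unfolding the integral over [0,1] into an integral
  over the line shows that its Fourier coefficients are the values sqrt (pi/A) exp (-pi^2 k^2 / A)
  of the Fourier transform of the Gaussian. The Fourier series with these coefficients converges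
  uniformly and has the same coefficients, hence equals P, because a continuous periodic function
  with vanishing Fourier coefficients is zero (trigonometric polynomials are uniformly dense by
  Stone-Weierstrass on the circle). That Fourier series is the theta series of the statement.
*)
theory Submission
  imports Defs "HOL-Probability.Characteristic_Functions"
begin

section \<open>Summation over the integers\<close>

lemma summable_on_int_nonneg:
  fixes f :: "int \<Rightarrow> real"
  assumes "\<And>n. f n \<ge> 0" and "summable (\<lambda>n. f (int n))" and "summable (\<lambda>n. f (- int n))"
  shows "f summable_on UNIV"
proof -
  have pos: "f summable_on range int"
    by (subst summable_on_reindex) (use assms in \<open>auto simp: o_def summable_on_UNIV_nonneg_real_iff\<close>)
  have neg: "f summable_on range (\<lambda>n::nat. - int n)"
    by (subst summable_on_reindex)
       (use assms in \<open>auto simp: o_def summable_on_UNIV_nonneg_real_iff inj_on_def\<close>)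
  have "x \<in> range int \<union> range (\<lambda>n::nat. - int n)" for x :: int
    using image_eqI[of x int "nat x"] image_eqI[of x "\<lambda>n. - int n" "nat (- x)"]
    by (cases "x \<ge> 0") auto
  then have "UNIV = range int \<union> range (\<lambda>n::nat. - int n)"
    by blast
  then show ?thesis
    using summable_on_union[OF pos neg] by simp
qed

lemma summable_on_exp_neg_abs_int:
  fixes C c :: real
  assumes "c > 0"
  shows "(\<lambda>n::int. C * exp (- c * \<bar>of_int n\<bar>)) summable_on UNIV"
proof (intro summable_on_cmult_right summable_on_int_nonneg)
  have "summable (\<lambda>n::nat. exp (- c) ^ n)"
    using assms by (intro summable_geometric) auto
  moreover have "exp (- c * \<bar>real_of_int (int n)\<bar>) = exp (- c) ^ n" for n
    by (simp add: exp_of_nat_mult[symmetric])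
  ultimately show "summable (\<lambda>n. exp (- c * \<bar>real_of_int (int n)\<bar>))"
    and "summable (\<lambda>n. exp (- c * \<bar>real_of_int (- int n)\<bar>))"
    by simp_all
qed auto

lemma infsum_of_real:
  fixes f :: "'a \<Rightarrow> real"
  assumes "f summable_on S"
  shows "(\<Sum>\<^sub>\<infinity>n\<in>S. complex_of_real (f n)) = complex_of_real (\<Sum>\<^sub>\<infinity>n\<in>S. f n)"
  using has_sum_of_real[OF has_sum_infsum[OF assms]] by (rule infsumI)

lemma filterlim_symmetric_intervals_finite_subsets:
  "filterlim (\<lambda>N::nat. {- int N..<int N}) (finite_subsets_at_top UNIV) sequentially"
proof (subst filterlim_finite_subsets_at_top, intro allI impI)
  fix X :: "int set"
  assume X: "finite X \<and> X \<subseteq> UNIV"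
  define B where "B = Max (insert 0 (abs ` X))"
  have B: "\<bar>x\<bar> \<le> B" if "x \<in> X" for x
    unfolding B_def using X that by (intro Max_ge) auto
  show "\<forall>\<^sub>F N in sequentially. finite {- int N..<int N} \<and> X \<subseteq> {- int N..<int N} \<and> {- int N..<int N} \<subseteq> UNIV"
    by (rule eventually_sequentiallyI[of "nat B + 1"]) (use B in force)
qed

lemma
  fixes f :: "int \<Rightarrow> real \<Rightarrow> complex"
  assumes bound: "\<And>n x. x \<in> {a..b} \<Longrightarrow> norm (f n x) \<le> M n" and M: "M summable_on UNIV"
    and cont: "\<And>n. continuous_on {a..b} (f n)"
  shows continuous_on_infsum_Weierstrass: "continuous_on {a..b} (\<lambda>x. \<Sum>\<^sub>\<infinity>n. f n x)"
    and has_sum_integral_Weierstrass: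
      "((\<lambda>n. integral {a..b} (f n)) has_sum integral {a..b} (\<lambda>x. \<Sum>\<^sub>\<infinity>n. f n x)) UNIV"
proof -
  have unif: "uniform_limit {a..b} (\<lambda>X y. \<Sum>n\<in>X. f n y) (\<lambda>y. \<Sum>\<^sub>\<infinity>n. f n y) (finite_subsets_at_top UNIV)"
    using bound M by (intro Weierstrass_m_test_general) auto
  have cont_sum: "\<And>X. continuous_on {a..b} (\<lambda>y. \<Sum>n\<in>X. f n y)"
    using cont by (intro continuous_on_sum) auto
  show "continuous_on {a..b} (\<lambda>x. \<Sum>\<^sub>\<infinity>n. f n x)"
    by (rule uniform_limit_theorem[OF _ unif]) (use cont_sum in auto)
  obtain I J where I: "\<And>X. ((\<lambda>y. \<Sum>n\<in>X. f n y) has_integral I X) {a..b}"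
    and J: "((\<lambda>y. \<Sum>\<^sub>\<infinity>n. f n y) has_integral J) {a..b}"
    and lim: "(I \<longlongrightarrow> J) (finite_subsets_at_top UNIV)"
    using uniform_limit_integral[OF unif cont_sum] by auto
  have "I X = (\<Sum>n\<in>X. integral {a..b} (f n))" if "finite X" for X
    using integral_unique[OF I[of X]] integral_sum[of X f "{a..b}"] cont integrable_continuous_real that
    by auto
  then have "((\<lambda>X. \<Sum>n\<in>X. integral {a..b} (f n)) \<longlongrightarrow> J) (finite_subsets_at_top UNIV)"
    by (intro Lim_transform_eventually[OF lim] eventually_finite_subsets_at_top_weakI) auto
  then show "((\<lambda>n. integral {a..b} (f n)) has_sum integral {a..b} (\<lambda>x. \<Sum>\<^sub>\<infinity>n. f n x)) UNIV"
    using J by (simp add: has_sum_def integral_unique)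
qed

section \<open>The Gaussian\<close>

lemma exp_neg_square_shift_le:
  fixes A x R :: real and n :: int
  assumes "A > 0" and "\<bar>x\<bar> \<le> R"
  shows "exp (- A * (x + of_int n)\<^sup>2) \<le> exp (A * (R + 1)) * exp (- A * \<bar>of_int n\<bar>)"
proof -
  have "(x + of_int n)\<^sup>2 \<ge> \<bar>x + of_int n\<bar> - 1"
    using zero_le_power2[of "\<bar>x + of_int n\<bar> - 1/2"]
    by (simp add: power2_eq_square algebra_simps abs_mult_self_eq)
  moreover have "\<bar>x + of_int n\<bar> \<ge> \<bar>of_int n\<bar> - R"
    using assms by linarith
  ultimately have "A * (\<bar>of_int n\<bar> - (R + 1)) \<le> A * (x + of_int n)\<^sup>2"
    using assms by (intro mult_left_mono) auto
  then show ?thesis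
    by (simp add: algebra_simps flip: exp_add)
qed

lemma exp_neg_square_le_exp_neg_abs_int:
  fixes c :: real and k :: int
  assumes "c > 0"
  shows "exp (- c * (of_int k)\<^sup>2) \<le> exp (- c * \<bar>of_int k\<bar>)"
proof -
  have "\<bar>real_of_int k\<bar> \<le> (of_int k)\<^sup>2"
  proof (cases "k = 0")
    case False
    then have "1 \<le> \<bar>real_of_int k\<bar>"
      by linarith
    then have "\<bar>real_of_int k\<bar> * 1 \<le> \<bar>real_of_int k\<bar> * \<bar>real_of_int k\<bar>"
      by (intro mult_left_mono) auto
    then show ?thesis
      by (simp add: power2_eq_square abs_mult_self_eq)
  qed simp
  then show ?thesis
    using assms by simp
qed

lemma std_normal_char_integral:
  "integrable lborel (\<lambda>x. std_normal_density x *\<^sub>R iexp (t * x))"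
  "(\<integral>x. std_normal_density x *\<^sub>R iexp (t * x) \<partial>lborel) = complex_of_real (exp (- t\<^sup>2 / 2))"
proof -
  show "integrable lborel (\<lambda>x. std_normal_density x *\<^sub>R iexp (t * x))"
  proof (rule Bochner_Integration.integrable_bound)
    show "integrable lborel std_normal_density"
      by (rule integrable_normal_density) simp
    show "AE x in lborel. norm (std_normal_density x *\<^sub>R iexp (t * x)) \<le> norm (std_normal_density x)"
      by (auto simp: norm_exp_i_times[unfolded of_real_def])
  qed measurable
  have "char std_normal_distribution t = (\<integral>x. std_normal_density x *\<^sub>R iexp (t * x) \<partial>lborel)"
    unfolding char_def by (subst integral_density) (auto simp: normal_density_nonneg)
  then show "(\<integral>x. std_normal_density x *\<^sub>R iexp (t * x) \<partial>lborel) = complex_of_real (exp (- t\<^sup>2 / 2))"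
    by (simp add: char_std_normal_distribution)
qed

lemma gauss_fourier_transform:
  fixes A \<xi> :: real
  assumes "A > 0"
  defines "h \<equiv> \<lambda>y. complex_of_real (exp (- A * y\<^sup>2)) * exp (\<i> * complex_of_real (2 * pi * \<xi> * y))"
  shows "integrable lborel h"
    and "(h has_integral complex_of_real (sqrt (pi / A) * exp (- pi\<^sup>2 * \<xi>\<^sup>2 / A))) UNIV"
proof -
  define s where "s = sqrt (2 * A)"
  have s: "s > 0" "s\<^sup>2 = 2 * A"
    using assms by (auto simp: s_def)
  define t where "t = 2 * pi * \<xi> / s"
  define f where "f x = std_normal_density x *\<^sub>R iexp (t * x)" for x
  have h_eq: "h = (\<lambda>y. sqrt (2 * pi) *\<^sub>R f (0 + s * y))"
  proof
    fix y
    have gauss: "exp (- A * y\<^sup>2) = exp (- (s * y)\<^sup>2 / 2)"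
      and phase: "2 * pi * \<xi> * y = t * (s * y)"
      using s by (simp_all add: power_mult_distrib t_def)
    show "h y = sqrt (2 * pi) *\<^sub>R f (0 + s * y)"
      unfolding h_def gauss phase by (simp add: f_def std_normal_density_def scaleR_conv_of_real)
  qed
  have int_f: "integrable lborel (\<lambda>y. f (0 + s * y))"
    using lborel_integrable_real_affine[OF std_normal_char_integral(1)[of t], of s 0] s
    by (simp add: f_def)
  then show int_h: "integrable lborel h"
    unfolding h_eq by simp
  have "(\<integral>y. h y \<partial>lborel) = (sqrt (2 * pi) / s) *\<^sub>R (s *\<^sub>R (\<integral>y. f (0 + s * y) \<partial>lborel))"
    unfolding h_eq using s by simp
  also have "\<dots> = (sqrt (2 * pi) / s) *\<^sub>R complex_of_real (exp (- t\<^sup>2 / 2))"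
    using lborel_integral_real_affine[of s f 0] std_normal_char_integral(2)[of t] s
    by (simp add: f_def)
  also have "\<dots> = complex_of_real (sqrt (pi / A) * exp (- pi\<^sup>2 * \<xi>\<^sup>2 / A))"
  proof -
    have "sqrt (2 * pi) / s = sqrt (pi / A)"
      using assms by (simp add: s_def real_sqrt_divide[symmetric])
    moreover have "- t\<^sup>2 / 2 = - pi\<^sup>2 * \<xi>\<^sup>2 / A"
      using s assms by (simp add: t_def power_divide power_mult_distrib field_simps)
    ultimately show ?thesis
      by (simp add: scaleR_conv_of_real)
  qed
  finally show "(h has_integral complex_of_real (sqrt (pi / A) * exp (- pi\<^sup>2 * \<xi>\<^sup>2 / A))) UNIV"
    using has_integral_integral_lborel[OF int_h] by simp
qed

section \<open>The characters of the circle\<close>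

definition fourier_char :: "int \<Rightarrow> real \<Rightarrow> complex" where
  "fourier_char k x = exp (\<i> * complex_of_real (2 * pi * of_int k * x))"

lemma fourier_char_add: "fourier_char k (x + y) = fourier_char k x * fourier_char k y"
  by (simp add: fourier_char_def algebra_simps flip: exp_add)

lemma fourier_char_mult: "fourier_char k x * fourier_char j x = fourier_char (k + j) x"
  by (simp add: fourier_char_def algebra_simps flip: exp_add)

lemma fourier_char_of_int: "fourier_char k (of_int n) = 1"
proof -
  have "\<i> * complex_of_real (2 * pi * of_int k * of_int n) = \<i> * (of_int (k * n) * (of_real pi * 2))"
    by simp
  then show ?thesis
    unfolding fourier_char_def by (simp only: exp_2pi_1_int)
qed

lemma fourier_char_periodic: "fourier_char k (x + of_int n) = fourier_char k x"
  by (simp add: fourier_char_add fourier_char_of_int)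

lemma norm_fourier_char [simp]: "norm (fourier_char k x) = 1"
  unfolding fourier_char_def by (rule norm_exp_i_times)

lemma cnj_fourier_char: "cnj (fourier_char k x) = fourier_char (- k) x"
  unfolding fourier_char_def exp_cnj by simp

lemma continuous_on_fourier_char [continuous_intros]: "continuous_on S (fourier_char k)"
  unfolding fourier_char_def by (intro continuous_intros)

lemma integral_fourier_char: "integral {0..1} (fourier_char k) = (if k = 0 then 1 else 0)"
proof (cases "k = 0")
  case False
  define c where "c = \<i> * complex_of_real (2 * pi * of_int k)"
  have "c \<noteq> 0"
    using False by (simp add: c_def)
  have eq: "fourier_char k x = exp (c * complex_of_real x)" for x
    by (simp add: fourier_char_def c_def algebra_simps)
  have "((\<lambda>x. exp (c * complex_of_real x) / c) has_vector_derivative fourier_char k x) (at x within {0..1})" for x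
  proof -
    have "((\<lambda>z. exp (c * z) / c) has_field_derivative exp (c * complex_of_real x)) (at (complex_of_real x))"
      using \<open>c \<noteq> 0\<close> by (auto intro!: derivative_eq_intros)
    then show ?thesis
      unfolding eq by (rule has_vector_derivative_real_field)
  qed
  then have "(fourier_char k has_integral
      (exp (c * complex_of_real 1) / c - exp (c * complex_of_real 0) / c)) {0..1}"
    by (intro fundamental_theorem_of_calculus) auto
  moreover have "exp (c * complex_of_real 1) = 1"
    using fourier_char_of_int[of k 1] eq[of 1] by simp
  ultimately show ?thesis
    using False by (simp add: integral_unique)
next
  case True
  then have "fourier_char k = (\<lambda>_. 1)"
    by (simp add: fourier_char_def fun_eq_iff)
  then show ?thesis
    using True by simp
qed

lemma fourier_char_1_eqE:
  assumes "fourier_char 1 x = fourier_char 1 y"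
  obtains n :: int where "x = y + of_int n"
proof -
  from assms obtain n :: int where
    "\<i> * complex_of_real (2 * pi * x) = \<i> * complex_of_real (2 * pi * y) + of_int (2 * n) * pi * \<i>"
    unfolding fourier_char_def exp_eq by auto
  then have "\<i> * complex_of_real (2 * pi * x) = \<i> * complex_of_real (2 * pi * (y + of_int n))"
    by (simp add: algebra_simps)
  then have "2 * pi * x = 2 * pi * (y + of_int n)"
    by (simp only: mult_cancel_left complex_i_not_zero of_real_eq_iff simp_thms)
  then have "x = y + of_int n"
    by simp
  then show ?thesis
    by (rule that)
qed

lemma fourier_char_1_surj:
  assumes "z \<in> sphere 0 1"
  obtains x where "x \<in> {0..1}" and "fourier_char 1 x = z"
proof -
  have "z \<noteq> 0"
    using assms by auto
  define t where "t = Im (Ln z)"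
  have "Re (Ln z) = 0"
    using assms \<open>z \<noteq> 0\<close> by (simp add: Re_Ln)
  then have "Ln z = \<i> * complex_of_real t"
    by (simp add: t_def complex_eq_iff)
  then have "fourier_char 1 (t / (2 * pi)) = z"
    using exp_Ln[OF \<open>z \<noteq> 0\<close>] by (simp add: fourier_char_def)
  then have "fourier_char 1 (t / (2 * pi) + of_int (- \<lfloor>t / (2 * pi)\<rfloor>)) = z"
    by (simp only: fourier_char_periodic)
  moreover have "t / (2 * pi) + of_int (- \<lfloor>t / (2 * pi)\<rfloor>) \<in> {0..1}"
    by simp linarith
  ultimately show ?thesis
    using that by blast
qed

section \<open>Uniqueness of Fourier coefficients\<close>

definition trig_poly :: "(complex \<times> int) list \<Rightarrow> real \<Rightarrow> complex" where
  "trig_poly L x = (\<Sum>(c, k)\<leftarrow>L. c * fourier_char k x)"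

lemma trig_poly_Nil [simp]: "trig_poly [] x = 0"
  by (simp add: trig_poly_def)

lemma trig_poly_Cons [simp]: "trig_poly ((c, k) # L) x = c * fourier_char k x + trig_poly L x"
  by (simp add: trig_poly_def)

lemma trig_poly_append [simp]: "trig_poly (L1 @ L2) x = trig_poly L1 x + trig_poly L2 x"
  by (simp add: trig_poly_def)

lemma trig_poly_scale: "trig_poly (map (\<lambda>(c, k). (a * c, k)) L) x = a * trig_poly L x"
  by (induction L) (auto simp: algebra_simps)

lemma trig_poly_mult:
  "trig_poly (concat (map (\<lambda>(c, k). map (\<lambda>(d, j). (c * d, k + j)) L2) L1)) x =
     trig_poly L1 x * trig_poly L2 x"
proof (induction L1)
  case (Cons ck L1)
  obtain c k where ck: "ck = (c, k)"
    by (cases ck)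
  have "trig_poly (map (\<lambda>(d, j). (c * d, k + j)) L2) x = c * fourier_char k x * trig_poly L2 x"
    by (induction L2) (auto simp: algebra_simps simp flip: fourier_char_mult)
  then show ?case
    using Cons.IH by (simp add: ck algebra_simps)
qed simp

lemma bounded_linear_on_circle_trig_poly:
  fixes f :: "complex \<Rightarrow> real"
  assumes "bounded_linear f"
  shows "complex_of_real (f (fourier_char 1 x)) =
    trig_poly [(f 1 / 2, 1), (f 1 / 2, -1), (f \<i> / (2 * \<i>), 1), (- f \<i> / (2 * \<i>), -1)] x"
proof -
  interpret bounded_linear f by fact
  have f_eq: "f z = Re z * f 1 + Im z * f \<i>" for z
  proof -
    have "Re z *\<^sub>R 1 + Im z *\<^sub>R \<i> = z"
      by (simp add: complex_eq_iff)
    from arg_cong[of _ _ f, OF this] show ?thesis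
      by (simp add: add scale)
  qed
  have re: "complex_of_real (Re z) = (z + cnj z) / 2"
    and im: "complex_of_real (Im z) = (z - cnj z) / (2 * \<i>)" for z
    by (simp_all add: complex_add_cnj complex_diff_cnj field_simps)
  have "complex_of_real (f (fourier_char 1 x)) =
      complex_of_real (Re (fourier_char 1 x)) * f 1 + complex_of_real (Im (fourier_char 1 x)) * f \<i>"
    unfolding f_eq[of "fourier_char 1 x"] by simp
  also have "\<dots> = (fourier_char 1 x + fourier_char (-1) x) / 2 * f 1
      + (fourier_char 1 x - fourier_char (-1) x) / (2 * \<i>) * f \<i>"
    unfolding re im cnj_fourier_char by simp
  also have "\<dots> = trig_poly [(f 1 / 2, 1), (f 1 / 2, -1), (f \<i> / (2 * \<i>), 1), (- f \<i> / (2 * \<i>), -1)] x"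
    unfolding trig_poly_def by (simp add: divide_simps) (simp add: algebra_simps)
  finally show ?thesis .
qed

lemma real_polynomial_function_on_circle_trig_poly:
  fixes p :: "complex \<Rightarrow> real"
  assumes "real_polynomial_function p"
  obtains L where "\<And>x. complex_of_real (p (fourier_char 1 x)) = trig_poly L x"
proof -
  have "\<exists>L. \<forall>x. complex_of_real (p (fourier_char 1 x)) = trig_poly L x"
    using assms
  proof induction
    case (linear f)
    then show ?case
      using bounded_linear_on_circle_trig_poly by blast
  next
    case (const c)
    have "complex_of_real c = trig_poly [(complex_of_real c, 0)] x" for x
      by (simp add: fourier_char_def)
    then show ?case
      by blast
  next
    case (add f g)
    then obtain L1 L2 where "\<forall>x. complex_of_real (f (fourier_char 1 x)) = trig_poly L1 x"
      and "\<forall>x. complex_of_real (g (fourier_char 1 x)) = trig_poly L2 x"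
      by blast
    then have "\<forall>x. complex_of_real (f (fourier_char 1 x) + g (fourier_char 1 x)) = trig_poly (L1 @ L2) x"
      by simp
    then show ?case
      by blast
  next
    case (mult f g)
    then obtain L1 L2 where "\<forall>x. complex_of_real (f (fourier_char 1 x)) = trig_poly L1 x"
      and "\<forall>x. complex_of_real (g (fourier_char 1 x)) = trig_poly L2 x"
      by blast
    then have "\<forall>x. complex_of_real (f (fourier_char 1 x) * g (fourier_char 1 x)) =
        trig_poly (concat (map (\<lambda>(c, k). map (\<lambda>(d, j). (c * d, k + j)) L2) L1)) x"
      by (simp add: trig_poly_mult)
    then show ?case
      by blast
  qed
  then show ?thesis
    using that by blast
qed

lemma periodic_of_int:
  fixes u :: "real \<Rightarrow> 'a"
  assumes per: "\<And>x. u (x + 1) = u x"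
  shows "u (x + of_int n) = u x"
proof -
  have of_nat: "u (y + of_nat k) = u y" for y k
  proof (induction k)
    case (Suc k)
    have "u (y + of_nat (Suc k)) = u ((y + of_nat k) + 1)"
      by (simp add: algebra_simps)
    with Suc show ?case
      by (simp only: per)
  qed simp
  show ?thesis
  proof (cases "n \<ge> 0")
    case True
    then show ?thesis
      using of_nat[of x "nat n"] by simp
  next
    case False
    then show ?thesis
      using of_nat[of "x + of_int n" "nat (- n)"] by simp
  qed
qed

lemma periodic_factors_through_circle:
  fixes u :: "real \<Rightarrow> 'a :: topological_space"
  assumes cont: "continuous_on {0..1} u" and per: "\<And>x. u (x + 1) = u x"
  obtains f where "continuous_on (sphere 0 1) f" and "\<And>x. f (fourier_char 1 x) = u x"
proof -
  define f where "f z = u (SOME x. fourier_char 1 x = z)" for z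
  have f_char: "f (fourier_char 1 x) = u x" for x
  proof -
    have "fourier_char 1 (SOME y. fourier_char 1 y = fourier_char 1 x) = fourier_char 1 x"
      by (rule someI) simp
    then obtain n where "(SOME y. fourier_char 1 y = fourier_char 1 x) = x + of_int n"
      by (rule fourier_char_1_eqE)
    then show ?thesis
      unfolding f_def using periodic_of_int[of u, OF per] by simp
  qed
  have "closed (f -` B \<inter> sphere 0 1)" if "closed B" for B
  proof -
    have eq: "f -` B \<inter> sphere 0 1 = fourier_char 1 ` ({0..1} \<inter> u -` B)"
      using f_char by (auto elim!: fourier_char_1_surj)
    have "closed ({0..1} \<inter> u -` B)"
      by (rule continuous_closed_preimage[OF cont]) (use that in auto)
    from compact_Int_closed[OF compact_Icc[of 0 1] this] have "compact ({0..1} \<inter> u -` B)"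
      by (simp add: Int_left_absorb)
    then have "compact (fourier_char 1 ` ({0..1} \<inter> u -` B))"
      by (rule compact_continuous_image[rotated]) (intro continuous_intros)
    then show ?thesis
      unfolding eq by (rule compact_imp_closed)
  qed
  then have "continuous_on (sphere 0 1) f"
    by (subst continuous_on_closed_vimage) auto
  then show ?thesis
    using f_char that by blast
qed

lemma trig_poly_approximation:
  fixes D :: "real \<Rightarrow> complex"
  assumes "continuous_on {0..1} D" and "\<And>x. D (x + 1) = D x" and "e > 0"
  obtains L where "\<And>x. norm (D x - trig_poly L x) < e"
proof -
  obtain f where f: "continuous_on (sphere 0 1) f" and f_char: "\<And>x. f (fourier_char 1 x) = D x"
    using periodic_factors_through_circle[OF assms(1,2)] by blast
  have "e / 2 > 0"
    using assms(3) by simp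
  have "continuous_on (sphere 0 1) (\<lambda>z. Re (f z))"
    using f by (intro continuous_intros)
  then obtain p where p: "real_polynomial_function p" "\<And>z. z \<in> sphere 0 1 \<Longrightarrow> \<bar>Re (f z) - p z\<bar> < e / 2"
    using Stone_Weierstrass_real_polynomial_function[OF compact_sphere _ \<open>e / 2 > 0\<close>] by blast
  have "continuous_on (sphere 0 1) (\<lambda>z. Im (f z))"
    using f by (intro continuous_intros)
  then obtain q where q: "real_polynomial_function q" "\<And>z. z \<in> sphere 0 1 \<Longrightarrow> \<bar>Im (f z) - q z\<bar> < e / 2"
    using Stone_Weierstrass_real_polynomial_function[OF compact_sphere _ \<open>e / 2 > 0\<close>] by blast
  obtain Lp where Lp: "\<And>x. complex_of_real (p (fourier_char 1 x)) = trig_poly Lp x"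
    using real_polynomial_function_on_circle_trig_poly[OF p(1)] by blast
  obtain Lq where Lq: "\<And>x. complex_of_real (q (fourier_char 1 x)) = trig_poly Lq x"
    using real_polynomial_function_on_circle_trig_poly[OF q(1)] by blast
  define L where "L = Lp @ map (\<lambda>(c, k). (\<i> * c, k)) Lq"
  have "norm (D x - trig_poly L x) < e" for x
  proof -
    let ?z = "fourier_char 1 x"
    have "D x - trig_poly L x = complex_of_real (Re (f ?z) - p ?z) + \<i> * complex_of_real (Im (f ?z) - q ?z)"
      unfolding L_def trig_poly_append trig_poly_scale f_char[symmetric] Lp[symmetric] Lq[symmetric]
      by (simp add: complex_eq_iff)
    also have "norm \<dots> \<le> \<bar>Re (f ?z) - p ?z\<bar> + \<bar>Im (f ?z) - q ?z\<bar>"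
      using norm_triangle_ineq[of "complex_of_real (Re (f ?z) - p ?z)" "\<i> * complex_of_real (Im (f ?z) - q ?z)"]
      by (simp only: norm_mult norm_ii mult_1 norm_of_real)
    also have "\<dots> < e"
      using p(2)[of ?z] q(2)[of ?z] by simp
    finally show ?thesis .
  qed
  then show ?thesis
    by (rule that)
qed

lemma has_integral_mult_trig_poly:
  fixes D :: "real \<Rightarrow> complex"
  assumes cont: "continuous_on {0..1} D"
    and coeffs: "\<And>k. integral {0..1} (\<lambda>x. D x * fourier_char k x) = 0"
  shows "((\<lambda>x. D x * trig_poly L x) has_integral 0) {0..1}"
proof (induction L)
  case (Cons ck L)
  obtain c k where ck: "ck = (c, k)"
    by (cases ck)
  have "(\<lambda>x. D x * fourier_char k x) integrable_on {0..1}"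
    by (intro integrable_continuous_interval continuous_intros cont)
  then have "((\<lambda>x. D x * fourier_char k x) has_integral 0) {0..1}"
    using coeffs[of k] by (metis integrable_integral)
  from has_integral_add[OF has_integral_mult_right[OF this, of c] Cons]
  show ?case
    by (simp add: ck algebra_simps)
qed simp

lemma integral_norm_square_le_approx:
  fixes D :: "real \<Rightarrow> complex"
  assumes cont: "continuous_on {0..1} D"
    and coeffs: "\<And>k. integral {0..1} (\<lambda>x. D x * fourier_char k x) = 0"
    and bound: "\<And>x. x \<in> {0..1} \<Longrightarrow> norm (D x) \<le> B"
    and approx: "\<And>x. norm (cnj (D x) - trig_poly L x) \<le> e"
  shows "integral {0..1} (\<lambda>x. (norm (D x))\<^sup>2) \<le> B * e"
proof -
  let ?P = "trig_poly L" and ?R = "\<lambda>x. D x * (cnj (D x) - trig_poly L x)"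
  have "continuous_on {0..1} ?P"
    by (induction L) (auto intro!: continuous_intros)
  then have R_cont: "continuous_on {0..1} ?R"
    by (intro continuous_intros cont)
  then have R: "(?R has_integral integral {0..1} ?R) {0..1}"
    by (intro integrable_integral integrable_continuous_interval)
  have "(\<lambda>x. complex_of_real ((norm (D x))\<^sup>2)) = (\<lambda>x. ?R x + D x * ?P x)"
    unfolding complex_norm_square by (simp add: right_diff_distrib)
  then have "((\<lambda>x. complex_of_real ((norm (D x))\<^sup>2)) has_integral integral {0..1} ?R) {0..1}"
    using has_integral_add[OF R has_integral_mult_trig_poly[OF cont coeffs]] by (simp only: add_0_right)
  moreover have "((\<lambda>x. complex_of_real ((norm (D x))\<^sup>2)) has_integral
      complex_of_real (integral {0..1} (\<lambda>x. (norm (D x))\<^sup>2))) {0..1}"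
    by (intro has_integral_of_real integrable_integral integrable_continuous_interval continuous_intros cont)
  ultimately have "complex_of_real (integral {0..1} (\<lambda>x. (norm (D x))\<^sup>2)) = integral {0..1} ?R"
    by (rule has_integral_unique[rotated])
  moreover have "norm (?R x) \<le> B * e" if "x \<in> {0..1}" for x
  proof -
    have "0 \<le> B"
      using bound[OF that] norm_ge_zero order_trans by blast
    then show ?thesis
      unfolding norm_mult using bound[OF that] approx[of x] by (intro mult_mono) auto
  qed
  then have "norm (integral {0..1} ?R) \<le> B * e * (1 - 0)"
    by (intro integral_bound R_cont) auto
  ultimately have "\<bar>integral {0..1} (\<lambda>x. (norm (D x))\<^sup>2)\<bar> \<le> B * e"
    by (metis norm_of_real mult_1_right diff_zero)
  then show ?thesis
    by simp
qed

lemma integral_norm_square_eq_0: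
  fixes D :: "real \<Rightarrow> complex"
  assumes cont: "continuous_on {0..1} D" and per: "\<And>x. D (x + 1) = D x"
    and coeffs: "\<And>k. integral {0..1} (\<lambda>x. D x * fourier_char k x) = 0"
  shows "integral {0..1} (\<lambda>x. (norm (D x))\<^sup>2) = 0"
proof -
  let ?I = "integral {0..1} (\<lambda>x. (norm (D x))\<^sup>2)"
  have "bounded (D ` {0..1})"
    by (intro compact_imp_bounded compact_continuous_image cont) auto
  then obtain B where B: "B > 0" "\<And>x. x \<in> {0..1} \<Longrightarrow> norm (D x) \<le> B"
    unfolding bounded_pos by auto
  have le: "?I \<le> B * e" if e: "e > 0" for e
  proof -
    have "continuous_on {0..1} (\<lambda>x. cnj (D x))"
      by (intro continuous_intros cont)
    moreover have "cnj (D (x + 1)) = cnj (D x)" for x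
      by (simp add: per)
    ultimately obtain L where "\<And>x. norm (cnj (D x) - trig_poly L x) < e"
      using trig_poly_approximation[of "\<lambda>x. cnj (D x)" e] e by blast
    then show ?thesis
      by (intro integral_norm_square_le_approx[OF cont coeffs B(2)] less_imp_le)
  qed
  have "?I \<ge> 0"
    by (intro integral_nonneg integrable_continuous_interval continuous_intros cont) auto
  moreover have "\<not> ?I > 0"
  proof
    assume pos: "?I > 0"
    have "?I \<le> B * (?I / (2 * B))"
      using pos B(1) by (intro le) simp
    also have "\<dots> = ?I / 2"
      using B(1) by simp
    finally show False
      using pos by simp
  qed
  ultimately show ?thesis
    by simp
qed

lemma fourier_coeffs_eq_0_imp_eq_0:
  fixes D :: "real \<Rightarrow> complex"
  assumes cont: "continuous_on {0..1} D" and per: "\<And>x. D (x + 1) = D x"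
    and coeffs: "\<And>k. integral {0..1} (\<lambda>x. D x * fourier_char k x) = 0"
  shows "D x = 0"
proof -
  have zero: "D y = 0" if "y \<in> {0..1}" for y
  proof -
    have norm_cont: "continuous_on {0..1} (\<lambda>x. (norm (D x))\<^sup>2)"
      by (intro continuous_intros cont)
    then have "((\<lambda>x. (norm (D x))\<^sup>2) has_integral integral {0..1} (\<lambda>x. (norm (D x))\<^sup>2)) {0..1}"
      by (intro integrable_integral integrable_continuous_interval)
    then have "((\<lambda>x. (norm (D x))\<^sup>2) has_integral 0) {0..1}"
      unfolding integral_norm_square_eq_0[OF cont per coeffs] .
    then have "(norm (D y))\<^sup>2 = 0"
      using norm_cont that by (intro has_integral_0_cbox_imp_0[of 0 1 "\<lambda>x. (norm (D x))\<^sup>2"]) auto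
    then show ?thesis
      by simp
  qed
  have "D x = D (x + of_int (- \<lfloor>x\<rfloor>))"
    by (rule periodic_of_int[of D, OF per, symmetric])
  also have "\<dots> = 0"
    by (rule zero) (simp add: floor_le_iff, linarith)
  finally show ?thesis .
qed

section \<open>Periodization\<close>

lemma sum_integrals_unit_intervals:
  fixes h :: "real \<Rightarrow> complex"
  assumes "continuous_on UNIV h"
  shows "(\<Sum>n\<in>{a..<a + int k}. integral {of_int n..of_int n + 1} h) = integral {of_int a..of_int a + of_nat k} h"
proof (induction k)
  case (Suc k)
  have "{a..<a + int (Suc k)} = insert (a + int k) {a..<a + int k}"
    by auto
  then have "(\<Sum>n\<in>{a..<a + int (Suc k)}. integral {of_int n..of_int n + 1} h) =
      integral {of_int a..of_int a + of_nat k} h + integral {of_int a + of_nat k..of_int a + of_nat (Suc k)} h"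
    using Suc by (simp add: algebra_simps)
  also have "\<dots> = integral {of_int a..of_int a + of_nat (Suc k)} h"
    by (intro Henstock_Kurzweil_Integration.integral_combine integrable_continuous_interval
        continuous_on_subset[OF assms]) auto
  finally show ?case .
qed simp

lemma tendsto_integral_symmetric_interval:
  fixes h :: "real \<Rightarrow> complex"
  assumes cont: "continuous_on UNIV h" and int: "integrable lborel h"
  shows "(\<lambda>N::nat. integral {- real N..real N} h) \<longlonglongrightarrow> integral UNIV h"
proof -
  have "(\<lambda>x. norm (h x)) integrable_on UNIV"
    using integrable_norm[OF int] by (rule integrable_on_lborel)
  then have "(\<lambda>N::nat. integral UNIV (\<lambda>x. if x \<in> {- real N..real N} then h x else 0)) \<longlonglongrightarrow> integral UNIV h"
  proof (rule dominated_convergence(2)[rotated])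
    show "(\<lambda>x. if x \<in> {- real N..real N} then h x else 0) integrable_on UNIV" for N
      unfolding integrable_restrict_UNIV
      by (intro integrable_continuous_interval continuous_on_subset[OF cont]) auto
    show "norm (if x \<in> {- real N..real N} then h x else 0) \<le> norm (h x)" for N x
      by auto
    show "(\<lambda>N. if x \<in> {- real N..real N} then h x else 0) \<longlonglongrightarrow> h x" for x
    proof (rule tendsto_eventually)
      obtain N0 :: nat where "\<bar>x\<bar> \<le> real N0"
        using real_arch_simple by blast
      then show "\<forall>\<^sub>F N in sequentially. (if x \<in> {- real N..real N} then h x else 0) = h x"
        by (intro eventually_sequentiallyI[of N0]) auto
    qed
  qed
  then show ?thesis
    by (simp only: integral_restrict_UNIV)
qed

lemma integral_periodization:
  fixes h :: "real \<Rightarrow> complex"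
  assumes cont: "continuous_on UNIV h" and int: "integrable lborel h"
    and bound: "\<And>n x. x \<in> {0..1} \<Longrightarrow> norm (h (x + of_int n)) \<le> M n" and M: "M summable_on UNIV"
  shows "integral {0..1} (\<lambda>x. \<Sum>\<^sub>\<infinity>n::int. h (x + of_int n)) = integral UNIV h"
proof -
  define L where "L = integral {0..1} (\<lambda>x. \<Sum>\<^sub>\<infinity>n::int. h (x + of_int n))"
  have shift: "integral {0..1} (\<lambda>x. h (x + of_int n)) = integral {of_int n..of_int n + 1} h" for n
  proof -
    have "(h has_integral integral {of_int n..of_int n + 1} h) {of_int n..of_int n + 1}"
      by (intro integrable_integral integrable_continuous_interval continuous_on_subset[OF cont]) auto
    from has_integral_shift_real_ivl[OF this, of "of_int n"] show ?thesis
      by (simp add: integral_unique)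
  qed
  have "((\<lambda>n. integral {0..1} (\<lambda>x. h (x + of_int n))) has_sum L) UNIV"
    unfolding L_def
  proof (rule has_sum_integral_Weierstrass[OF bound M])
    show "continuous_on {0..1} (\<lambda>x. h (x + of_int n))" for n
      by (intro continuous_on_compose2[OF cont] continuous_intros) auto
  qed
  then have "(\<lambda>N::nat. \<Sum>n\<in>{- int N..<int N}. integral {of_int n..of_int n + 1} h) \<longlonglongrightarrow> L"
    using filterlim_compose[OF _ filterlim_symmetric_intervals_finite_subsets]
    by (simp add: shift has_sum_def o_def)
  moreover have "(\<Sum>n\<in>{- int N..<int N}. integral {of_int n..of_int n + 1} h) = integral {- real N..real N} h" for N
    using sum_integrals_unit_intervals[OF cont, of "- int N" "2 * N"]
    by (simp add: algebra_simps)
  ultimately have "(\<lambda>N::nat. integral {- real N..real N} h) \<longlonglongrightarrow> L"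
    by simp
  then show ?thesis
    unfolding L_def[symmetric] using tendsto_integral_symmetric_interval[OF cont int] LIMSEQ_unique by blast
qed

section \<open>Jacobi's identity\<close>

definition gauss_periodization :: "real \<Rightarrow> real \<Rightarrow> real" where
  "gauss_periodization A x = (\<Sum>\<^sub>\<infinity>n::int. exp (- A * (x + of_int n)\<^sup>2))"

definition gauss_fourier_coeff :: "real \<Rightarrow> int \<Rightarrow> real" where
  "gauss_fourier_coeff A k = sqrt (pi / A) * exp (- pi\<^sup>2 * (of_int k)\<^sup>2 / A)"

definition gauss_fourier_series :: "real \<Rightarrow> real \<Rightarrow> complex" where
  "gauss_fourier_series A x = (\<Sum>\<^sub>\<infinity>k::int. complex_of_real (gauss_fourier_coeff A k) * fourier_char k x)"

lemma summable_on_gauss_shifts: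
  fixes A x :: real
  assumes "A > 0"
  shows "(\<lambda>n::int. exp (- A * (x + of_int n)\<^sup>2)) summable_on UNIV"
  using summable_on_exp_neg_abs_int[OF assms, of "exp (A * (\<bar>x\<bar> + 1))"]
  by (rule summable_on_comparison_test) (use exp_neg_square_shift_le[OF assms] in auto)

lemma of_real_gauss_periodization:
  fixes A x :: real
  assumes "A > 0"
  shows "complex_of_real (gauss_periodization A x) =
    (\<Sum>\<^sub>\<infinity>n::int. complex_of_real (exp (- A * (x + of_int n)\<^sup>2)))"
  unfolding gauss_periodization_def by (rule infsum_of_real[OF summable_on_gauss_shifts[OF assms], symmetric])

lemma continuous_on_gauss_periodization:
  fixes A a b :: real
  assumes "A > 0"
  shows "continuous_on {a..b} (\<lambda>x. complex_of_real (gauss_periodization A x))"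
  unfolding of_real_gauss_periodization[OF assms]
proof (rule continuous_on_infsum_Weierstrass)
  define R where "R = max \<bar>a\<bar> \<bar>b\<bar>"
  show "norm (complex_of_real (exp (- A * (x + of_int n)\<^sup>2))) \<le> exp (A * (R + 1)) * exp (- A * \<bar>of_int n\<bar>)"
    if "x \<in> {a..b}" for n x
  proof -
    have "\<bar>x\<bar> \<le> R"
      using that by (auto simp: R_def)
    then show ?thesis
      using exp_neg_square_shift_le[OF assms, of x R n] by simp
  qed
  show "(\<lambda>n::int. exp (A * (R + 1)) * exp (- A * \<bar>of_int n\<bar>)) summable_on UNIV"
    by (rule summable_on_exp_neg_abs_int[OF assms])
qed (intro continuous_intros)

lemma gauss_periodization_periodic: "gauss_periodization A (x + 1) = gauss_periodization A x"
proof -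
  have "gauss_periodization A x = (\<Sum>\<^sub>\<infinity>n\<in>range (\<lambda>n::int. n + 1). exp (- A * (x + of_int n)\<^sup>2))"
    unfolding gauss_periodization_def by (simp add: surj_plus)
  also have "\<dots> = gauss_periodization A (x + 1)"
    unfolding gauss_periodization_def by (subst infsum_reindex) (simp_all add: o_def algebra_simps)
  finally show ?thesis ..
qed

lemma gauss_periodization_fourier_coeff:
  assumes A: "A > 0"
  shows "integral {0..1} (\<lambda>x. complex_of_real (gauss_periodization A x) * fourier_char k x) =
    complex_of_real (gauss_fourier_coeff A k)"
proof -
  define h where "h = (\<lambda>y. complex_of_real (exp (- A * y\<^sup>2)) * fourier_char k y)"
  have h: "integrable lborel h" "(h has_integral complex_of_real (gauss_fourier_coeff A k)) UNIV"
    unfolding h_def fourier_char_def gauss_fourier_coeff_def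
    by (rule gauss_fourier_transform[OF A])+
  have "integral {0..1} (\<lambda>x. \<Sum>\<^sub>\<infinity>n::int. h (x + of_int n)) = integral UNIV h"
  proof (rule integral_periodization)
    show "continuous_on UNIV h"
      unfolding h_def by (intro continuous_intros)
    show "norm (h (x + of_int n)) \<le> exp (A * (1 + 1)) * exp (- A * \<bar>of_int n\<bar>)" if "x \<in> {0..1}" for n x
      using exp_neg_square_shift_le[OF A, of x 1 n] that by (simp add: h_def norm_mult)
  qed (use h summable_on_exp_neg_abs_int[OF A] in auto)
  moreover have "(\<Sum>\<^sub>\<infinity>n::int. h (x + of_int n)) = complex_of_real (gauss_periodization A x) * fourier_char k x" for x
    unfolding h_def fourier_char_periodic infsum_cmult_left' of_real_gauss_periodization[OF A] ..
  ultimately show ?thesis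
    using h(2) by (simp add: integral_unique)
qed

lemma norm_gauss_fourier_coeff_le:
  assumes "A > 0"
  shows "norm (gauss_fourier_coeff A k) \<le> sqrt (pi / A) * exp (- (pi\<^sup>2 / A) * \<bar>of_int k\<bar>)"
proof -
  have "exp (- pi\<^sup>2 * (of_int k)\<^sup>2 / A) \<le> exp (- (pi\<^sup>2 / A) * \<bar>of_int k\<bar>)"
    using exp_neg_square_le_exp_neg_abs_int[of "pi\<^sup>2 / A" k] assms by simp
  then show ?thesis
    using assms by (simp add: gauss_fourier_coeff_def mult_left_mono)
qed

lemma continuous_on_gauss_fourier_series:
  assumes "A > 0"
  shows "continuous_on {a..b} (gauss_fourier_series A)"
  unfolding gauss_fourier_series_def[abs_def]
proof (rule continuous_on_infsum_Weierstrass)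
  show "norm (complex_of_real (gauss_fourier_coeff A k) * fourier_char k x) \<le>
      sqrt (pi / A) * exp (- (pi\<^sup>2 / A) * \<bar>of_int k\<bar>)" for k x
    using norm_gauss_fourier_coeff_le[OF assms, of k] by (simp add: norm_mult)
  show "(\<lambda>k::int. sqrt (pi / A) * exp (- (pi\<^sup>2 / A) * \<bar>of_int k\<bar>)) summable_on UNIV"
    by (rule summable_on_exp_neg_abs_int) (use assms in simp)
qed (intro continuous_intros)

lemma gauss_fourier_series_periodic: "gauss_fourier_series A (x + 1) = gauss_fourier_series A x"
  unfolding gauss_fourier_series_def using fourier_char_periodic[of _ x 1] by simp

lemma gauss_fourier_series_fourier_coeff:
  assumes A: "A > 0"
  shows "integral {0..1} (\<lambda>x. gauss_fourier_series A x * fourier_char k x) = complex_of_real (gauss_fourier_coeff A k)"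
proof -
  define f where "f = (\<lambda>j x. gauss_fourier_coeff A j *\<^sub>R fourier_char (j + k) x)"
  have sum: "((\<lambda>j. integral {0..1} (f j)) has_sum integral {0..1} (\<lambda>x. \<Sum>\<^sub>\<infinity>j. f j x)) UNIV"
  proof (rule has_sum_integral_Weierstrass)
    show "norm (f j x) \<le> sqrt (pi / A) * exp (- (pi\<^sup>2 / A) * \<bar>of_int j\<bar>)" for j x
      using norm_gauss_fourier_coeff_le[OF A, of j] by (simp add: f_def)
    show "(\<lambda>j::int. sqrt (pi / A) * exp (- (pi\<^sup>2 / A) * \<bar>of_int j\<bar>)) summable_on UNIV"
      by (rule summable_on_exp_neg_abs_int) (use A in simp)
    show "continuous_on {0..1} (f j)" for j
      unfolding f_def by (intro continuous_intros)
  qed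
  have series: "(\<Sum>\<^sub>\<infinity>j. f j x) = gauss_fourier_series A x * fourier_char k x" for x
    unfolding f_def gauss_fourier_series_def infsum_cmult_left'[symmetric]
    by (intro infsum_cong) (simp add: scaleR_conv_of_real flip: fourier_char_mult)
  have "integral {0..1} (f j) = gauss_fourier_coeff A j *\<^sub>R (if j + k = 0 then 1 else 0)" for j
    unfolding f_def integral_cmul integral_fourier_char ..
  moreover have "((\<lambda>j. gauss_fourier_coeff A j *\<^sub>R (if j + k = 0 then (1::complex) else 0)) has_sum
      gauss_fourier_coeff A (- k) *\<^sub>R 1) UNIV"
    by (subst has_sum_cong_neutral[where T="{- k}"]) (auto intro: has_sum_finiteI)
  ultimately have "((\<lambda>j. integral {0..1} (f j)) has_sum complex_of_real (gauss_fourier_coeff A k)) UNIV"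
    by (simp add: gauss_fourier_coeff_def scaleR_conv_of_real)
  from has_sum_unique[OF sum this] show ?thesis
    unfolding series .
qed

theorem gauss_periodization_eq_fourier_series:
  assumes A: "A > 0"
  shows "complex_of_real (gauss_periodization A x) = gauss_fourier_series A x"
proof -
  define D where "D y = complex_of_real (gauss_periodization A y) - gauss_fourier_series A y" for y
  have cont: "continuous_on {0..1} D"
    unfolding D_def
    by (intro continuous_intros continuous_on_gauss_periodization[OF A] continuous_on_gauss_fourier_series[OF A])
  moreover have "D (y + 1) = D y" for y
    by (simp add: D_def gauss_periodization_periodic gauss_fourier_series_periodic)
  moreover have "integral {0..1} (\<lambda>y. D y * fourier_char k y) = 0" for k
  proof -
    have "integral {0..1} (\<lambda>y. D y * fourier_char k y) =
        integral {0..1} (\<lambda>y. complex_of_real (gauss_periodization A y) * fourier_char k y)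
        - integral {0..1} (\<lambda>y. gauss_fourier_series A y * fourier_char k y)"
      unfolding D_def left_diff_distrib
      by (intro integral_diff integrable_continuous_interval continuous_intros
          continuous_on_gauss_periodization[OF A] continuous_on_gauss_fourier_series[OF A])
    then show ?thesis
      by (simp add: gauss_periodization_fourier_coeff[OF A] gauss_fourier_series_fourier_coeff[OF A])
  qed
  ultimately have "D x = 0"
    by (rule fourier_coeffs_eq_0_imp_eq_0)
  then show ?thesis
    by (simp add: D_def)
qed

section \<open>The comb convolution as a theta function\<close>

lemma complete_square:
  fixes \<mu> \<nu> X q :: real
  assumes "\<mu> > 0" and "\<nu> > 0"
  shows "- X\<^sup>2 / (2 * \<mu>) - (q - X)\<^sup>2 / (2 * \<nu>) =
    - q\<^sup>2 / (2 * (\<mu> + \<nu>)) - (\<mu> + \<nu>) / (2 * \<mu> * \<nu>) * (X - \<mu> * q / (\<mu> + \<nu>))\<^sup>2"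
proof -
  define S where "S = \<mu> + \<nu>"
  have S: "S > 0"
    using assms by (simp add: S_def)
  have "X - \<mu> * q / S = (S * X - \<mu> * q) / S"
    using S by (simp add: field_simps)
  then have "- q\<^sup>2 / (2 * S) - S / (2 * \<mu> * \<nu>) * (X - \<mu> * q / S)\<^sup>2 =
      (- \<mu> * \<nu> * q\<^sup>2 - (S * X - \<mu> * q)\<^sup>2) / (2 * \<mu> * \<nu> * S)"
    using S assms by (simp add: power_divide power2_eq_square field_simps)
  also have "- \<mu> * \<nu> * q\<^sup>2 - (S * X - \<mu> * q)\<^sup>2 = S * (- \<nu> * X\<^sup>2 - \<mu> * (q - X)\<^sup>2)"
    unfolding S_def by (simp add: power2_eq_square algebra_simps)
  also have "S * (- \<nu> * X\<^sup>2 - \<mu> * (q - X)\<^sup>2) / (2 * \<mu> * \<nu> * S) = - X\<^sup>2 / (2 * \<mu>) - (q - X)\<^sup>2 / (2 * \<nu>)"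
    using S assms by (simp add: field_simps)
  finally show ?thesis
    unfolding S_def ..
qed

lemma comb_conv_gauss_eq_gauss_periodization:
  fixes \<mu> \<nu> \<Gamma> b q :: real
  assumes "\<mu> > 0" and "\<nu> > 0" and "\<Gamma> \<noteq> 0"
  shows "comb_conv_gauss \<mu> \<Gamma> b \<nu> q = exp (- q\<^sup>2 / (2 * (\<mu> + \<nu>))) / sqrt (2 * pi * \<nu>) *
    gauss_periodization ((\<mu> + \<nu>) * \<Gamma>\<^sup>2 / (2 * \<mu> * \<nu>)) (b - \<mu> * q / ((\<mu> + \<nu>) * \<Gamma>))"
proof -
  define A where "A = (\<mu> + \<nu>) * \<Gamma>\<^sup>2 / (2 * \<mu> * \<nu>)"
  define x where "x = b - \<mu> * q / ((\<mu> + \<nu>) * \<Gamma>)"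
  have exponent: "- (of_int s + b)\<^sup>2 * \<Gamma>\<^sup>2 / (2 * \<mu>) + - (q - (of_int s + b) * \<Gamma>)\<^sup>2 / (2 * \<nu>) =
      - q\<^sup>2 / (2 * (\<mu> + \<nu>)) + - A * (x + of_int s)\<^sup>2" for s :: int
  proof -
    have "\<Gamma> * (\<mu> * q / ((\<mu> + \<nu>) * \<Gamma>)) = \<mu> * q / (\<mu> + \<nu>)"
      using assms(3) by simp
    then have "\<Gamma> * (x + of_int s) = (of_int s + b) * \<Gamma> - \<mu> * q / (\<mu> + \<nu>)"
      by (simp add: x_def algebra_simps)
    then have "A * (x + of_int s)\<^sup>2 = (\<mu> + \<nu>) / (2 * \<mu> * \<nu>) * ((of_int s + b) * \<Gamma> - \<mu> * q / (\<mu> + \<nu>))\<^sup>2"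
      by (simp add: A_def power_mult_distrib flip: power_mult_distrib[of \<Gamma>])
    then show ?thesis
      using complete_square[OF assms(1,2), of "(of_int s + b) * \<Gamma>" q] by (simp add: power_mult_distrib)
  qed
  have summand: "exp (- (of_int s + b)\<^sup>2 * \<Gamma>\<^sup>2 / (2 * \<mu>)) * gauss \<nu> (q - (of_int s + b) * \<Gamma>) =
      exp (- q\<^sup>2 / (2 * (\<mu> + \<nu>))) / sqrt (2 * pi * \<nu>) * exp (- A * (x + of_int s)\<^sup>2)" for s :: int
  proof -
    have "exp (- (of_int s + b)\<^sup>2 * \<Gamma>\<^sup>2 / (2 * \<mu>)) * gauss \<nu> (q - (of_int s + b) * \<Gamma>) =
        exp (- (of_int s + b)\<^sup>2 * \<Gamma>\<^sup>2 / (2 * \<mu>) + - (q - (of_int s + b) * \<Gamma>)\<^sup>2 / (2 * \<nu>))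
        / sqrt (2 * pi * \<nu>)"
      unfolding gauss_def exp_add by simp
    then show ?thesis
      unfolding exponent exp_add by simp
  qed
  show ?thesis
    unfolding comb_conv_gauss_def summand gauss_periodization_def A_def[symmetric] x_def[symmetric]
    by (rule infsum_cmult_right')
qed

lemma theta_char_zero_eq_gauss_fourier_series:
  fixes A b x :: real and z \<tau> :: complex
  assumes "A > 0" and "pi * \<i> * \<tau> = complex_of_real (- pi\<^sup>2 / A)"
    and "z + complex_of_real b = complex_of_real x"
  shows "complex_of_real (sqrt (pi / A)) * theta_char 0 b z \<tau> = gauss_fourier_series A x"
proof -
  have "pi * \<i> * \<tau> * (complex_of_real (of_int s + 0))\<^sup>2 +
      2 * pi * \<i> * (z + complex_of_real b) * complex_of_real (of_int s + 0) =
    complex_of_real (- pi\<^sup>2 * (of_int s)\<^sup>2 / A) + \<i> * complex_of_real (2 * pi * of_int s * x)" for s :: int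
    unfolding assms(2,3) by simp
  then have "exp (pi * \<i> * \<tau> * (complex_of_real (of_int s + 0))\<^sup>2 +
      2 * pi * \<i> * (z + complex_of_real b) * complex_of_real (of_int s + 0)) =
    complex_of_real (exp (- pi\<^sup>2 * (of_int s)\<^sup>2 / A)) * fourier_char s x" for s :: int
    by (simp only: exp_add fourier_char_def exp_of_real)
  then show ?thesis
    unfolding theta_char_def gauss_fourier_series_def gauss_fourier_coeff_def
    by (simp add: infsum_cmult_right' mult.assoc)
qed

lemma comb_conv_theta_arguments:
  fixes \<mu> \<nu> \<Gamma> b q :: real
  assumes "\<mu> > 0" and "\<nu> > 0" and "\<Gamma> \<noteq> 0"
  shows "pi * \<i> * (2 * pi * \<i> * complex_of_real \<nu> / complex_of_real ((1 + \<nu> / \<mu>) * \<Gamma>\<^sup>2)) =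
      complex_of_real (- pi\<^sup>2 / ((\<mu> + \<nu>) * \<Gamma>\<^sup>2 / (2 * \<mu> * \<nu>)))"
    and "complex_of_real (- q / ((1 + \<nu> / \<mu>) * \<Gamma>)) + complex_of_real b =
      complex_of_real (b - \<mu> * q / ((\<mu> + \<nu>) * \<Gamma>))"
proof -
  have "\<mu> + \<nu> \<noteq> 0"
    using assms by simp
  have "(1 + \<nu> / \<mu>) * \<Gamma>\<^sup>2 = (\<mu> + \<nu>) * \<Gamma>\<^sup>2 / \<mu>"
    using assms by (simp add: field_simps)
  then show "pi * \<i> * (2 * pi * \<i> * complex_of_real \<nu> / complex_of_real ((1 + \<nu> / \<mu>) * \<Gamma>\<^sup>2)) =
      complex_of_real (- pi\<^sup>2 / ((\<mu> + \<nu>) * \<Gamma>\<^sup>2 / (2 * \<mu> * \<nu>)))"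
    using assms \<open>\<mu> + \<nu> \<noteq> 0\<close> by (simp add: divide_simps power2_eq_square)
  have "(1 + \<nu> / \<mu>) * \<Gamma> = (\<mu> + \<nu>) * \<Gamma> / \<mu>"
    using assms by (simp add: field_simps)
  then show "complex_of_real (- q / ((1 + \<nu> / \<mu>) * \<Gamma>)) + complex_of_real b =
      complex_of_real (b - \<mu> * q / ((\<mu> + \<nu>) * \<Gamma>))"
    using assms by simp
qed

lemma comb_conv_prefactor:
  fixes \<mu> \<nu> \<Gamma> q :: real
  assumes "\<mu> > 0" and "\<nu> > 0" and "\<Gamma> \<noteq> 0"
  shows "exp (- q\<^sup>2 / (2 * (\<mu> + \<nu>))) / sqrt (2 * pi * \<nu>) * sqrt (pi / ((\<mu> + \<nu>) * \<Gamma>\<^sup>2 / (2 * \<mu> * \<nu>))) =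
    sqrt (2 * pi * \<mu> / \<Gamma>\<^sup>2) * gauss (\<mu> + \<nu>) q"
proof -
  define A where "A = (\<mu> + \<nu>) * \<Gamma>\<^sup>2 / (2 * \<mu> * \<nu>)"
  have "\<mu> + \<nu> \<noteq> 0"
    using assms by simp
  then have "(pi / A) / (2 * pi * \<nu>) = (2 * pi * \<mu> / \<Gamma>\<^sup>2) / (2 * pi * (\<mu> + \<nu>))"
    unfolding A_def using assms by (simp add: divide_simps)
  then have sqrt_eq: "sqrt (pi / A) / sqrt (2 * pi * \<nu>) = sqrt (2 * pi * \<mu> / \<Gamma>\<^sup>2) / sqrt (2 * pi * (\<mu> + \<nu>))"
    by (metis real_sqrt_divide)
  have "exp (- q\<^sup>2 / (2 * (\<mu> + \<nu>))) * (sqrt (pi / A) / sqrt (2 * pi * \<nu>)) =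
      sqrt (2 * pi * \<mu> / \<Gamma>\<^sup>2) * gauss (\<mu> + \<nu>) q"
    unfolding sqrt_eq by (simp add: gauss_def)
  then show ?thesis
    unfolding A_def[symmetric] by simp
qed

theorem lemma1:
  fixes \<mu> \<nu> \<Gamma> :: real and a :: rat and q :: real
  assumes "\<mu> > 0" and "\<nu> > 0" and "\<Gamma> \<noteq> 0"
  shows "complex_of_real (comb_conv_gauss \<mu> \<Gamma> (of_rat a) \<nu> q) =
    complex_of_real (sqrt (2 * pi * \<mu> / \<Gamma>\<^sup>2) * gauss (\<mu> + \<nu>) q) *
    theta_char 0 (of_rat a)
      (complex_of_real (- q / ((1 + \<nu> / \<mu>) * \<Gamma>)))
      (2 * pi * \<i> * complex_of_real \<nu> / complex_of_real ((1 + \<nu> / \<mu>) * \<Gamma>\<^sup>2))"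
proof -
  define A where "A = (\<mu> + \<nu>) * \<Gamma>\<^sup>2 / (2 * \<mu> * \<nu>)"
  define x where "x = of_rat a - \<mu> * q / ((\<mu> + \<nu>) * \<Gamma>)"
  define K where "K = exp (- q\<^sup>2 / (2 * (\<mu> + \<nu>))) / sqrt (2 * pi * \<nu>)"
  let ?\<theta> = "theta_char 0 (of_rat a) (complex_of_real (- q / ((1 + \<nu> / \<mu>) * \<Gamma>)))
      (2 * pi * \<i> * complex_of_real \<nu> / complex_of_real ((1 + \<nu> / \<mu>) * \<Gamma>\<^sup>2))"
  have A: "A > 0"
    using assms by (simp add: A_def)
  have theta: "complex_of_real (sqrt (pi / A)) * ?\<theta> = gauss_fourier_series A x"
    using A unfolding A_def x_def
    by (intro theta_char_zero_eq_gauss_fourier_series comb_conv_theta_arguments assms)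
  have "complex_of_real (comb_conv_gauss \<mu> \<Gamma> (of_rat a) \<nu> q) =
      complex_of_real K * complex_of_real (gauss_periodization A x)"
    unfolding comb_conv_gauss_eq_gauss_periodization[OF assms] A_def x_def K_def by simp
  also have "\<dots> = complex_of_real (K * sqrt (pi / A)) * ?\<theta>"
    unfolding gauss_periodization_eq_fourier_series[OF A] theta[symmetric] by simp
  finally show ?thesis
    unfolding K_def A_def comb_conv_prefactor[OF assms] .
qed

end
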